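(* If $A\subseteq\Omega$ is finite, then $A\in\mathcal{B}_{\mathcal{L}}$ and $\widehat{\mu}(A)=0$; that is, $A=\bigcap_n A^{(n)}$ and $\lim_{n\to\infty}\mu(A^{(n)})=0$.
   Context: For $n\ge1$, $\Omega_n$ is the set of strings $\alpha_0\alpha_1\cdots\alpha_n$ with $\alpha_k\in\{0,1\}$, $\alpha_0=0$. For $\omega=\alpha_0\cdots\alpha_n$, $\omega'=\alpha'_0\cdots\alpha'_n\in\Omega_n$ let $D^n(\omega,\omega')=2^{-n}\prod_{k=1}^n i^{|\alpha_k-\alpha_{k-1}|}\prod_{k=1}^n i^{-|\alpha'_k-\alpha'_{k-1}|}\,\delta_{\alpha_n\alpha'_n}$ ($i=\sqrt{-1}$) and for $E\subseteq\Omega_n$, $\mu_n(E)=\sum_{\omega,\omega'\in E}D^n(\omega,\omega')$. $\Omega$ is the set of infinite sequences $\alpha_0\alpha_1\cdots$ with $\alpha_k\in\{0,1\}$, $\alpha_0=0$. A cylinder set is a set $\{\alpha_0\alpha_1\cdots\in\Omega:\alpha_0\cdots\alpha_n\in E\}$ with $E\subseteq\Omega_n$, and $\mu$ of it is $\mu_n(E)$ (well defined). For $A\subseteq\Omega$ and $n\ge0$, $A^{(n)}=\{\omega\in\Omega:\text{some }\omega'\in A\text{ has the same first }n+1\text{ entries as }\omega\}$ (a cylinder set). $A$ is a lower set if $A=\bigcap_nA^{(n)}$; $A$ is beneficial if $\lim_n\mu(A^{(n)})$ exists and is finite, with $\widehat{\mu}(A)$ that limit; $\mathcal{B}_{\mathcal{L}}$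 is the collection of beneficial lower sets. *)

theory Defs
  imports Complex_Main
begin

text \<open>Binary digits are encoded as bool: False = 0, True = 1.
  Finite strings alpha_0 ... alpha_n are lists of length n+1;
  infinite sequences are functions nat \<Rightarrow> bool.\<close>

definition Omega_n :: "nat \<Rightarrow> bool list set" where
  "Omega_n n = {w. length w = Suc n \<and> w ! 0 = False}"

definition jump :: "bool list \<Rightarrow> nat \<Rightarrow> nat" where
  "jump w k = (if w ! k = w ! (k - 1) then 0 else 1)"

definition D :: "nat \<Rightarrow> bool list \<Rightarrow> bool list \<Rightarrow> complex" where
  "D n w w' = (1 / 2 ^ n)
     * (\<Prod>k\<in>{1..n}. \<i> powi int (jump w k))
     * (\<Prod>k\<in>{1..n}. \<i> powi (- int (jump w' k)))
     * (if w ! n = w' ! n then 1 else 0)"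

definition mu_n :: "nat \<Rightarrow> bool list set \<Rightarrow> complex" where
  "mu_n n E = (\<Sum>w\<in>E. \<Sum>w'\<in>E. D n w w')"

definition Omega :: "(nat \<Rightarrow> bool) set" where
  "Omega = {a. a 0 = False}"

definition prefix :: "nat \<Rightarrow> (nat \<Rightarrow> bool) \<Rightarrow> bool list" where
  "prefix n a = map a [0..<Suc n]"

text \<open>Measure of a cylinder set C represented at level n,
  i.e. C = {a \<in> Omega. prefix n a \<in> E} with E = prefix n ` C.\<close>
definition mu_cyl :: "nat \<Rightarrow> (nat \<Rightarrow> bool) set \<Rightarrow> complex" where
  "mu_cyl n C = mu_n n (prefix n ` C)"

definition approx :: "(nat \<Rightarrow> bool) set \<Rightarrow> nat \<Rightarrow> (nat \<Rightarrow> bool) set" where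
  "approx A n = {w \<in> Omega. \<exists>w'\<in>A. prefix n w = prefix n w'}"

definition lower_set :: "(nat \<Rightarrow> bool) set \<Rightarrow> bool" where
  "lower_set A \<longleftrightarrow> A = (\<Inter>n. approx A n)"

definition beneficial :: "(nat \<Rightarrow> bool) set \<Rightarrow> bool" where
  "beneficial A \<longleftrightarrow> convergent (\<lambda>n. mu_cyl n (approx A n))"

definition mu_hat :: "(nat \<Rightarrow> bool) set \<Rightarrow> complex" where
  "mu_hat A = lim (\<lambda>n. mu_cyl n (approx A n))"

definition B_L :: "(nat \<Rightarrow> bool) set set" where
  "B_L = {A. A \<subseteq> Omega \<and> lower_set A \<and> beneficial A}"

end

theory Submission
  imports Defs
begin

text \<open>Every entry of D^n is a product of unimodular factors scaled by 2^-n, so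
  |mu_n(E)| <= |E|^2 2^-n. For finite A the set A^(n) has at most |A| distinct prefixes
  of length n+1, hence mu(A^(n)) tends to 0. Moreover a sequence outside A eventually
  differs in its prefix from each of the finitely many members of A, so A is a lower set.\<close>

lemma norm_D_le: "norm (D n w w') \<le> 1 / 2 ^ n"
proof -
  have unimodular: "norm (\<Prod>k\<in>{1..n}. \<i> powi f k) = 1" for f :: "nat \<Rightarrow> int"
    by (simp add: prod_norm[symmetric] norm_power_int)
  have "norm (D n w w') = 1 / 2 ^ n * norm (if w ! n = w' ! n then 1 else 0 :: complex)"
    unfolding D_def norm_mult
    using unimodular[of "\<lambda>k. int (jump w k)"] unimodular[of "\<lambda>k. - int (jump w' k)"]
    by (simp add: norm_divide norm_power)
  also have "\<dots> \<le> 1 / 2 ^ n" by simp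
  finally show ?thesis .
qed

lemma norm_mu_n_le:
  assumes "finite E"
  shows "norm (mu_n n E) \<le> real (card E) ^ 2 / 2 ^ n"
proof -
  have "norm (mu_n n E) \<le> (\<Sum>w\<in>E. \<Sum>w'\<in>E. norm (D n w w'))"
    unfolding mu_n_def by (rule order_trans[OF norm_sum sum_mono[OF norm_sum]])
  also have "\<dots> \<le> (\<Sum>w\<in>E. \<Sum>w'\<in>E. 1 / 2 ^ n)"
    by (intro sum_mono norm_D_le)
  also have "\<dots> = real (card E) ^ 2 / 2 ^ n"
    by (simp add: power2_eq_square)
  finally show ?thesis .
qed

lemma prefix_eq_iff: "prefix n a = prefix n b \<longleftrightarrow> (\<forall>k\<le>n. a k = b k)"
  unfolding prefix_def by (auto simp del: upt_Suc simp: map_eq_conv)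

lemma eventually_prefix_neq:
  assumes "a \<noteq> b"
  shows "eventually (\<lambda>n. prefix n a \<noteq> prefix n b) sequentially"
proof -
  obtain k where "a k \<noteq> b k" using assms by blast
  then show ?thesis
    by (intro eventually_sequentiallyI[of k]) (auto simp: prefix_eq_iff)
qed

lemma subset_approx: "A \<subseteq> Omega \<Longrightarrow> A \<subseteq> approx A n"
  unfolding approx_def by blast

lemma Inter_approx_subset:
  assumes "finite A"
  shows "(\<Inter>n. approx A n) \<subseteq> A"
proof
  fix w assume w: "w \<in> (\<Inter>n. approx A n)"
  show "w \<in> A"
  proof (rule ccontr)
    assume "w \<notin> A"
    then have "\<forall>a\<in>A. eventually (\<lambda>n. prefix n w \<noteq> prefix n a) sequentially"
      by (auto intro: eventually_prefix_neq)
    then have "eventually (\<lambda>n. \<forall>a\<in>A. prefix n w \<noteq> prefix n a) sequentially"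
      using assms by (simp add: eventually_ball_finite)
    then obtain n where "\<forall>a\<in>A. prefix n w \<noteq> prefix n a"
      by (auto dest: eventually_happens)
    with w show False unfolding approx_def by blast
  qed
qed

lemma prefix_image_approx:
  assumes "A \<subseteq> Omega"
  shows "prefix n ` approx A n = prefix n ` A"
  using subset_approx[OF assms] unfolding approx_def by (auto simp: image_iff)

lemma norm_mu_cyl_approx_le:
  assumes "A \<subseteq> Omega" and "finite A"
  shows "norm (mu_cyl n (approx A n)) \<le> real (card A) ^ 2 / 2 ^ n"
proof -
  have "norm (mu_cyl n (approx A n)) = norm (mu_n n (prefix n ` A))"
    unfolding mu_cyl_def prefix_image_approx[OF assms(1)] ..
  also have "\<dots> \<le> real (card (prefix n ` A)) ^ 2 / 2 ^ n"
    using assms(2) by (intro norm_mu_n_le) auto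
  also have "\<dots> \<le> real (card A) ^ 2 / 2 ^ n"
    using card_image_le[OF assms(2)] by (intro divide_right_mono power_mono) auto
  finally show ?thesis .
qed

lemma mu_cyl_approx_tendsto_0:
  assumes "A \<subseteq> Omega" and "finite A"
  shows "(\<lambda>n. mu_cyl n (approx A n)) \<longlonglongrightarrow> 0"
proof (rule tendsto_0_le[where K = 1])
  have "(\<lambda>n. real (card A) ^ 2 * (1 / 2) ^ n) \<longlonglongrightarrow> 0"
    by (intro tendsto_mult_right_zero LIMSEQ_realpow_zero) auto
  then show "(\<lambda>n. real (card A) ^ 2 / 2 ^ n) \<longlonglongrightarrow> 0"
    by (simp add: power_one_over)
  show "eventually (\<lambda>n. norm (mu_cyl n (approx A n)) \<le> norm (real (card A) ^ 2 / 2 ^ n) * 1)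
          sequentially"
    using norm_mu_cyl_approx_le[OF assms] by simp
qed

theorem lemma3p4:
  fixes A :: "(nat \<Rightarrow> bool) set"
  assumes "A \<subseteq> Omega" and "finite A"
  shows "A \<in> B_L \<and> mu_hat A = 0 \<and> A = (\<Inter>n. approx A n)
         \<and> (\<lambda>n. mu_cyl n (approx A n)) \<longlonglongrightarrow> 0"
proof -
  have lim: "(\<lambda>n. mu_cyl n (approx A n)) \<longlonglongrightarrow> 0"
    using mu_cyl_approx_tendsto_0[OF assms] .
  have lower: "A = (\<Inter>n. approx A n)"
    using subset_approx[OF assms(1)] Inter_approx_subset[OF assms(2)] by blast
  have "beneficial A"
    unfolding beneficial_def using lim by (rule convergentI)
  moreover have "mu_hat A = 0"
    unfolding mu_hat_def using lim by (rule limI)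
  ultimately show ?thesis
    using lim lower assms(1) unfolding B_L_def lower_set_def by blast
qed

end
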